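(* Let $u\in\mathcal{B}^N$, $m\in\mathbb{R}$, $\varepsilon>0$, $(r,\sigma)\in F(N,A,u,m)$ and $(t,\sigma)\in F(N,A,u,m-\varepsilon)$ such that $r_a>t_a$ for each $a\in A$. Suppose there is no $i\in N$ and $a\in A$ with $r_a>b_i>t_a$. Then $\sigma$ is a minimum weight perfect matching in $\mathcal{F}^u_\kappa(t)$.
   Context: Fix a finite set $\{\rho_1,\dots,\rho_k\}\subseteq\mathbb{R}_+$ with $\rho_1=0$. $N=\{1,\dots,n\}$ agents, $A$ a set of $n$ rooms. $\mathcal{B}$ is the set of utility functions $u_i(r_a,a)=v^i_a-r_a-\rho_i\max\{0,r_a-b_i\}$ with $v^i\in\mathbb{R}^A$, $b_i\ge0$, $\rho_i\in\{\rho_1,\dots,\rho_k\}$. An allocation for $(N,A,u,m)$ is $(r,\sigma)$ with $\sigma:N\to A$ a bijection, $r\in\mathbb{R}^A$, $\sum_ar_a=m$; envy-free means $u_i(r_{\sigma(i)},\sigma(i))\ge u_i(r_{\sigma(j)},\sigma(j))$ for all $i,j$; $F(N,A,u,m)$ is the set of envy-free allocations. $\kappa_{ia}(u,t)=1+\rho_i$ if $t_a\ge b_i$ and $1$ otherwise (absolute marginal disutility of an increase of rent of room $a$ at $t$). For $t$ with some envy-free $(t,\sigma)$, $\mathcal{F}(t)$ is the bipartite graph on $N\cup A$ with edge $(i,a)$ iff $u_i(t_{\sigma(i)},\sigma(i))=u_i(t_a,a)$, and $\mathcal{F}^u_\kappa(t)$ has weights $w(i,a)=\log\kappa_{ia}(u,t)$;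 a minimum weight perfect matching is a bijection $\mu:N\to A$ using only edges of $\mathcal{F}(t)$ minimizing $\sum_iw(i,\mu(i))$ among such. *)

theory Defs
  imports "HOL-Analysis.Analysis"
begin

definition util :: "('i \<Rightarrow> 'a \<Rightarrow> real) \<Rightarrow> ('i \<Rightarrow> real) \<Rightarrow> ('i \<Rightarrow> real)
    \<Rightarrow> 'i \<Rightarrow> real \<Rightarrow> 'a \<Rightarrow> real" where
  "util v b rho i x a = v i a - x - rho i * max 0 (x - b i)"

definition in_B :: "real set \<Rightarrow> 'i set \<Rightarrow> ('i \<Rightarrow> real) \<Rightarrow> ('i \<Rightarrow> real) \<Rightarrow> bool" where
  "in_B Rhos N b rho \<longleftrightarrow> (\<forall>i\<in>N. b i \<ge> 0 \<and> rho i \<in> Rhos)"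

definition allocation :: "'i set \<Rightarrow> 'a set \<Rightarrow> real \<Rightarrow> ('a \<Rightarrow> real) \<Rightarrow> ('i \<Rightarrow> 'a) \<Rightarrow> bool" where
  "allocation N A m r \<sigma> \<longleftrightarrow> bij_betw \<sigma> N A \<and> (\<Sum>a\<in>A. r a) = m"

definition envy_free :: "'i set \<Rightarrow> 'a set \<Rightarrow> ('i \<Rightarrow> real \<Rightarrow> 'a \<Rightarrow> real) \<Rightarrow> real
    \<Rightarrow> ('a \<Rightarrow> real) \<Rightarrow> ('i \<Rightarrow> 'a) \<Rightarrow> bool" where
  "envy_free N A u m r \<sigma> \<longleftrightarrow> allocation N A m r \<sigma> \<and>
     (\<forall>i\<in>N. \<forall>j\<in>N. u i (r (\<sigma> i)) (\<sigma> i) \<ge> u i (r (\<sigma> j)) (\<sigma> j))"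

definition kappa :: "('i \<Rightarrow> real) \<Rightarrow> ('i \<Rightarrow> real) \<Rightarrow> ('a \<Rightarrow> real) \<Rightarrow> 'i \<Rightarrow> 'a \<Rightarrow> real" where
  "kappa b rho t i a = (if t a \<ge> b i then 1 + rho i else 1)"

definition indiff_edge :: "('i \<Rightarrow> real \<Rightarrow> 'a \<Rightarrow> real) \<Rightarrow> ('a \<Rightarrow> real) \<Rightarrow> ('i \<Rightarrow> 'a)
    \<Rightarrow> 'i \<Rightarrow> 'a \<Rightarrow> bool" where
  "indiff_edge u t \<sigma> i a \<longleftrightarrow> u i (t (\<sigma> i)) (\<sigma> i) = u i (t a) a"

definition perfect_matching :: "'i set \<Rightarrow> 'a set \<Rightarrow> ('i \<Rightarrow> real \<Rightarrow> 'a \<Rightarrow> real)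
    \<Rightarrow> ('a \<Rightarrow> real) \<Rightarrow> ('i \<Rightarrow> 'a) \<Rightarrow> ('i \<Rightarrow> 'a) \<Rightarrow> bool" where
  "perfect_matching N A u t \<sigma> \<mu> \<longleftrightarrow> bij_betw \<mu> N A \<and> (\<forall>i\<in>N. indiff_edge u t \<sigma> i (\<mu> i))"

definition min_weight_pm :: "'i set \<Rightarrow> 'a set \<Rightarrow> ('i \<Rightarrow> 'a \<Rightarrow> real) \<Rightarrow> ('i \<Rightarrow> real)
    \<Rightarrow> ('i \<Rightarrow> real) \<Rightarrow> ('a \<Rightarrow> real) \<Rightarrow> ('i \<Rightarrow> 'a) \<Rightarrow> ('i \<Rightarrow> 'a) \<Rightarrow> bool" where
  "min_weight_pm N A v b rho t \<sigma> \<mu> \<longleftrightarrow>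
     perfect_matching N A (util v b rho) t \<sigma> \<mu> \<and>
     (\<forall>\<nu>. perfect_matching N A (util v b rho) t \<sigma> \<nu> \<longrightarrow>
        (\<Sum>i\<in>N. ln (kappa b rho t i (\<mu> i))) \<le> (\<Sum>i\<in>N. ln (kappa b rho t i (\<nu> i))))"

end

theory Submission
  imports Defs
begin

text \<open>Put \<open>d a = r a - t a > 0\<close>. As no budget lies strictly between \<open>t a\<close> and \<open>r a\<close>, the
  utility of room \<open>a\<close> is affine on \<open>[t a, r a]\<close> with slope \<open>-\<kappa> i a\<close>, so raising the rents
  from \<open>t\<close> to \<open>r\<close> costs agent \<open>i\<close> exactly \<open>\<kappa> i a * d a\<close> on room \<open>a\<close>. If \<open>i\<close> is indifferent
  at \<open>t\<close> between \<open>\<sigma> i\<close> and \<open>\<nu> i\<close> but does not envy \<open>\<nu> i\<close> at \<open>r\<close>, this gives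
  \<open>\<kappa> i (\<sigma> i) * d (\<sigma> i) \<le> \<kappa> i (\<nu> i) * d (\<nu> i)\<close>. Taking logarithms and summing over \<open>i\<close>, the
  terms \<open>ln (d a)\<close> add up to the same total for every bijection \<open>N \<rightarrow> A\<close> and cancel.\<close>

lemma util_eq_minus_kappa_mult:
  assumes "t a \<le> r a" and "\<not> (t a < b i \<and> b i < r a)"
  shows "util v b rho i (r a) a = util v b rho i (t a) a - kappa b rho t i a * (r a - t a)"
proof (cases "b i \<le> t a")
  case True
  then show ?thesis using assms(1) by (simp add: util_def kappa_def max_def algebra_simps)
next
  case False
  then have "r a \<le> b i" using assms(2) by linarith
  then show ?thesis using False by (simp add: util_def kappa_def max_def algebra_simps)
qed

lemma kappa_pos: "0 \<le> rho i \<Longrightarrow> 0 < kappa b rho t i a"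
  by (simp add: kappa_def)

lemma envy_free_no_envy_room:
  assumes "envy_free N A u m r \<sigma>" and "i \<in> N" and "a \<in> A"
  shows "u i (r a) a \<le> u i (r (\<sigma> i)) (\<sigma> i)"
proof -
  have "bij_betw \<sigma> N A" using assms(1) by (simp add: envy_free_def allocation_def)
  then obtain j where "j \<in> N" and "a = \<sigma> j"
    using assms(3) by (metis bij_betw_imp_surj_on imageE)
  then show ?thesis using assms(1,2) by (simp add: envy_free_def)
qed

lemma perfect_matching_self: "bij_betw \<sigma> N A \<Longrightarrow> perfect_matching N A u t \<sigma> \<sigma>"
  by (simp add: perfect_matching_def indiff_edge_def)

lemma kappa_mult_gap_le_of_indiff:
  assumes ef: "envy_free N A (util v b rho) m r \<sigma>" and i: "i \<in> N" and a: "a \<in> A"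
    and indiff: "util v b rho i (t (\<sigma> i)) (\<sigma> i) = util v b rho i (t a) a"
    and t_le_r: "\<And>a. a \<in> A \<Longrightarrow> t a \<le> r a"
    and no_budget_between: "\<And>a. a \<in> A \<Longrightarrow> \<not> (t a < b i \<and> b i < r a)"
  shows "kappa b rho t i (\<sigma> i) * (r (\<sigma> i) - t (\<sigma> i)) \<le> kappa b rho t i a * (r a - t a)"
proof -
  have \<sigma>_i: "\<sigma> i \<in> A"
    using ef i by (auto simp: envy_free_def allocation_def dest: bij_betw_apply)
  show ?thesis
    using envy_free_no_envy_room[OF ef i a] indiff
      util_eq_minus_kappa_mult[of t "\<sigma> i" r b i v rho, OF t_le_r[OF \<sigma>_i] no_budget_between[OF \<sigma>_i]]
      util_eq_minus_kappa_mult[of t a r b i v rho, OF t_le_r[OF a] no_budget_between[OF a]]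
    by linarith
qed

lemma sum_ln_le_of_mult_potential_le:
  fixes w :: "'i \<Rightarrow> 'a \<Rightarrow> real" and d :: "'a \<Rightarrow> real"
  assumes \<sigma>: "bij_betw \<sigma> N A" and \<nu>: "bij_betw \<nu> N A"
    and d_pos: "\<And>a. a \<in> A \<Longrightarrow> 0 < d a"
    and w_pos: "\<And>i a. i \<in> N \<Longrightarrow> a \<in> A \<Longrightarrow> 0 < w i a"
    and le: "\<And>i. i \<in> N \<Longrightarrow> w i (\<sigma> i) * d (\<sigma> i) \<le> w i (\<nu> i) * d (\<nu> i)"
  shows "(\<Sum>i\<in>N. ln (w i (\<sigma> i))) \<le> (\<Sum>i\<in>N. ln (w i (\<nu> i)))"
proof -
  have ln_le: "ln (w i (\<sigma> i)) + ln (d (\<sigma> i)) \<le> ln (w i (\<nu> i)) + ln (d (\<nu> i))"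
    if i: "i \<in> N" for i
  proof -
    have "\<sigma> i \<in> A" "\<nu> i \<in> A" using \<sigma> \<nu> i by (auto dest: bij_betw_apply)
    with i have pos: "0 < w i (\<sigma> i)" "0 < d (\<sigma> i)" "0 < w i (\<nu> i)" "0 < d (\<nu> i)"
      by (simp_all add: d_pos w_pos)
    then have "ln (w i (\<sigma> i)) + ln (d (\<sigma> i)) = ln (w i (\<sigma> i) * d (\<sigma> i))"
      by (simp add: ln_mult_pos)
    also have "\<dots> \<le> ln (w i (\<nu> i) * d (\<nu> i))"
      using pos le[OF i] by simp
    also have "\<dots> = ln (w i (\<nu> i)) + ln (d (\<nu> i))"
      using pos by (simp add: ln_mult_pos)
    finally show ?thesis .
  qed
  have "(\<Sum>i\<in>N. ln (d (\<sigma> i))) = (\<Sum>a\<in>A. ln (d a))"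
    using sum.reindex_bij_betw[OF \<sigma>] .
  moreover have "(\<Sum>i\<in>N. ln (d (\<nu> i))) = (\<Sum>a\<in>A. ln (d a))"
    using sum.reindex_bij_betw[OF \<nu>] .
  moreover have "(\<Sum>i\<in>N. ln (w i (\<sigma> i))) + (\<Sum>i\<in>N. ln (d (\<sigma> i)))
      \<le> (\<Sum>i\<in>N. ln (w i (\<nu> i))) + (\<Sum>i\<in>N. ln (d (\<nu> i)))"
    using sum_mono[OF ln_le] by (simp add: sum.distrib)
  ultimately show ?thesis by simp
qed

theorem lemma7:
  fixes N :: "'i set" and A :: "'a set" and Rhos :: "real set"
    and v :: "'i \<Rightarrow> 'a \<Rightarrow> real" and b rho :: "'i \<Rightarrow> real"
    and m \<epsilon> :: real and r t :: "'a \<Rightarrow> real" and \<sigma> :: "'i \<Rightarrow> 'a"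
  assumes "finite Rhos" and "0 \<in> Rhos" and "\<forall>x\<in>Rhos. x \<ge> 0"
    and "finite N" and "finite A" and "card A = card N"
    and "in_B Rhos N b rho"
    and "\<epsilon> > 0"
    and "envy_free N A (util v b rho) m r \<sigma>"
    and "envy_free N A (util v b rho) (m - \<epsilon>) t \<sigma>"
    and "\<forall>a\<in>A. r a > t a"
    and "\<not> (\<exists>i\<in>N. \<exists>a\<in>A. r a > b i \<and> b i > t a)"
  shows "min_weight_pm N A v b rho t \<sigma> \<sigma>"
proof -
  let ?u = "util v b rho" and ?\<kappa> = "kappa b rho t"
  have \<sigma>: "bij_betw \<sigma> N A" using assms(9) by (simp add: envy_free_def allocation_def)
  have \<kappa>_pos: "0 < ?\<kappa> i a" if "i \<in> N" for i a
    using assms(3,7) that by (intro kappa_pos) (auto simp: in_B_def)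
  have "(\<Sum>i\<in>N. ln (?\<kappa> i (\<sigma> i))) \<le> (\<Sum>i\<in>N. ln (?\<kappa> i (\<nu> i)))"
    if "perfect_matching N A ?u t \<sigma> \<nu>" for \<nu>
  proof -
    from that have \<nu>: "bij_betw \<nu> N A" and indiff: "\<And>i. i \<in> N \<Longrightarrow> indiff_edge ?u t \<sigma> i (\<nu> i)"
      by (auto simp: perfect_matching_def)
    have cost_le: "?\<kappa> i (\<sigma> i) * (r (\<sigma> i) - t (\<sigma> i)) \<le> ?\<kappa> i (\<nu> i) * (r (\<nu> i) - t (\<nu> i))"
      if i: "i \<in> N" for i
      using assms(11,12) i indiff[OF i] bij_betw_apply[OF \<nu> i]
      by (intro kappa_mult_gap_le_of_indiff[OF assms(9)]) (auto simp: indiff_edge_def)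
    show ?thesis
      by (rule sum_ln_le_of_mult_potential_le[where w = ?\<kappa> and d = "\<lambda>a. r a - t a", OF \<sigma> \<nu>])
        (simp_all add: assms(11) \<kappa>_pos cost_le)
  qed
  then show ?thesis using perfect_matching_self[OF \<sigma>] by (simp add: min_weight_pm_def)
qed

end
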